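(* Let $F\in Sh^{s,0}_{\Lambda_L}(X)\cap Mod(X)$, given by data $(V,\rho,W_s,\rho_s,T_s)$, and let $f$ be any local trivialization. Let $c_s$ be a pure framed cord starting and ending on (the framing curve of) $K_s$, regarded (after homotopy) as a loop in $X\setminus L$. Then $\epsilon_F(\lambda_s)=\mathrm{tr}(\rho(\ell_s))-\mathrm{tr}(\rho_s(K_s))$, $\epsilon_F(\mu_s)=1-\mathrm{tr}(\mathrm{id}_V-\rho(m_s))$, $\epsilon_F(c_s)=\mathrm{tr}(\rho(c_s)-\rho(m_s\cdot c_s))$, where $\epsilon_F=\epsilon_{(F,f)}$. In particular these values do not depend on the choice of the local trivialization.
   Context: $X=\mathbb{R}^3$ or $S^3$, $k$ a field, $(L,L')$ an $r$-component framed oriented link, $L=K_1\sqcup\dots\sqcup K_r$. Sheaves in $Sh^{s,0}_{\Lambda_L}(X)\cap Mod(X)$ (sheaves of $k$-vector spaces with micro-support at infinity in the unit conormal of $L$, microlocally simple with Morse cone in degree $0$) are equivalent to data $(V,\rho,W_s,\rho_s,T_s)$: $\rho:\pi_1(X\setminus L)\to GL(V)$ the local system on the complement ($V$ finite-dimensional), $\rho_s:\pi_1(K_s)\to GL(W_s)$ the local system on $K_s$, $T_s:W_s\to V$ the injective restriction map with one-dimensional cokernel, the meridian $m_s$ acting trivially on its image and $\rho(\ell_s)T_s=T_s\rho_s(K_s)$ for the longitude $\ell_s$; we view $W_s\subset V$. $A_c$ denotes trivialized parallel transport along a path $c$, $M_t=\rho(m_t)$. A local trivialization is an $r$-tuple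 of surjective linear maps $f_s:V\to k$ with $f_s|_{W_s}=0$. $\epsilon_{(F,f)}$ is the augmentation of the framed cord algebra $\mathrm{Cord}(L)$ given on generators by $\epsilon(c_{st})=f_sA_{c_{st}}(\mathrm{id}_V-M_t)f_t^{-1}$ for framed cords $c_{st}$ from the framing curve of $K_s$ to that of $K_t$, $\epsilon(\lambda_s)=f_sA_{\ell_s}f_s^{-1}$, $\epsilon(\mu_s)=1-f_s(\mathrm{id}_V-M_s)f_s^{-1}$, with $f_s^{-1}$ any right inverse of $f_s$. *)

theory Defs
  imports "Jordan_Normal_Form.Matrix"
begin

definition mat_trace :: "'a::comm_ring_1 mat \<Rightarrow> 'a" where
  "mat_trace A = (\<Sum>i<dim_row A. A $$ (i, i))"

definition scal :: "'a mat \<Rightarrow> 'a" where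
  "scal A = A $$ (0, 0)"

end

theory Submission
  imports Defs "Jordan_Normal_Form.Determinant"
begin

(* Since f vanishes on W = im T and f g = 1, the block matrix [T | g] is invertible, and the first
   rows of its inverse give a left inverse S of T with T S + g f = 1, i.e. V = W + k g.
   For L with L T = T R (W invariant), cyclicity of the trace gives tr L = tr R + f L g.
   Taking L = Lg yields the longitude formula; since M acts trivially on W, 1 - M and
   A (1 - M) kill W, so the same identity with R = 0 yields the other two. *)

lemma mat_trace_add:
  fixes A B :: "'a::comm_ring_1 mat"
  assumes "A \<in> carrier_mat n n" "B \<in> carrier_mat n n"
  shows "mat_trace (A + B) = mat_trace A + mat_trace B"
  using assms by (simp add: mat_trace_def sum.distrib)

lemma mat_trace_mult_comm:
  fixes A B :: "'a::comm_ring_1 mat"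
  assumes "A \<in> carrier_mat n m" "B \<in> carrier_mat m n"
  shows "mat_trace (A * B) = mat_trace (B * A)"
proof -
  have "mat_trace (A * B) = (\<Sum>i<n. \<Sum>j<m. A $$ (i, j) * B $$ (j, i))"
    using assms by (simp add: mat_trace_def scalar_prod_def atLeast0LessThan)
  also have "\<dots> = (\<Sum>j<m. \<Sum>i<n. B $$ (j, i) * A $$ (i, j))"
    by (subst sum.swap) (simp add: mult.commute)
  also have "\<dots> = mat_trace (B * A)"
    using assms by (simp add: mat_trace_def scalar_prod_def atLeast0LessThan)
  finally show ?thesis .
qed

lemma mat_trace_eq_scal: "A \<in> carrier_mat 1 1 \<Longrightarrow> mat_trace A = scal A"
  by (simp add: mat_trace_def scal_def)

definition append_cols :: "'a::zero mat \<Rightarrow> 'a mat \<Rightarrow> 'a mat" where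
  "append_cols A B = four_block_mat A B (0\<^sub>m 0 (dim_col A)) (0\<^sub>m 0 (dim_col B))"

lemma carrier_append_cols:
  "A \<in> carrier_mat n m \<Longrightarrow> B \<in> carrier_mat n k \<Longrightarrow> append_cols A B \<in> carrier_mat n (m + k)"
  unfolding append_cols_def by (metis add_0_right four_block_carrier_mat carrier_matD(2) zero_carrier_mat)

lemma append_cols_mult_vec:
  fixes A B :: "'a::comm_ring_1 mat"
  assumes A: "A \<in> carrier_mat n m" and B: "B \<in> carrier_mat n k" and v: "v \<in> carrier_vec (m + k)"
  shows "append_cols A B *\<^sub>v v = A *\<^sub>v vec_first v m + B *\<^sub>v vec_last v k"
proof -
  have "append_cols A B *\<^sub>v v = append_cols A B *\<^sub>v (vec_first v m @\<^sub>v vec_last v k)"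
    using v by simp
  also have "\<dots> = (A *\<^sub>v vec_first v m + B *\<^sub>v vec_last v k) @\<^sub>v
      (0\<^sub>m 0 m *\<^sub>v vec_first v m + 0\<^sub>m 0 k *\<^sub>v vec_last v k)"
    unfolding append_cols_def carrier_matD(2)[OF A] carrier_matD(2)[OF B]
    using A B by (intro four_block_mat_mult_vec) auto
  finally show ?thesis using A B by (auto intro!: eq_vecI)
qed

lemma append_cols_mult_append_rows:
  fixes A B C D :: "'a::comm_ring_1 mat"
  assumes A: "A \<in> carrier_mat n m" and B: "B \<in> carrier_mat n k"
    and C: "C \<in> carrier_mat m p" and D: "D \<in> carrier_mat k p"
  shows "append_cols A B * (C @\<^sub>r D) = A * C + B * D"
proof -
  have "append_cols A B * (C @\<^sub>r D) = four_block_mat (A * C + B * D) (A * 0\<^sub>m m 0 + B * 0\<^sub>m k 0)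
      (0\<^sub>m 0 m * C + 0\<^sub>m 0 k * D) (0\<^sub>m 0 m * 0\<^sub>m m 0 + 0\<^sub>m 0 k * 0\<^sub>m k 0)"
    unfolding append_cols_def append_rows_def carrier_matD(2)[OF A] carrier_matD(2)[OF B]
      carrier_matD(1)[OF C] carrier_matD(1)[OF D]
    using A B C D by (intro mult_four_block_mat) auto
  also have "\<dots> = A * C + B * D"
    using A B C D by (auto intro!: eq_matI)
  finally show ?thesis .
qed

lemma det_append_cols_complement_nonzero:
  fixes T G F :: "'a::field mat"
  assumes T: "T \<in> carrier_mat (m + k) m"
    and T_inj: "\<forall>v \<in> carrier_vec m. T *\<^sub>v v = 0\<^sub>v (m + k) \<longrightarrow> v = 0\<^sub>v m"
    and G: "G \<in> carrier_mat (m + k) k" and F: "F \<in> carrier_mat k (m + k)"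
    and FT: "F * T = 0\<^sub>m k m" and FG: "F * G = 1\<^sub>m k"
  shows "det (append_cols T G) \<noteq> 0"
proof -
  have "v = 0\<^sub>v (m + k)"
    if v: "v \<in> carrier_vec (m + k)" and Pv: "append_cols T G *\<^sub>v v = 0\<^sub>v (m + k)" for v
  proof -
    define y c where "y = vec_first v m" and "c = vec_last v k"
    have y: "y \<in> carrier_vec m" and c: "c \<in> carrier_vec k" unfolding y_def c_def by simp_all
    have Tyc: "T *\<^sub>v y + G *\<^sub>v c = 0\<^sub>v (m + k)"
      using Pv append_cols_mult_vec[OF T G v] unfolding y_def c_def by simp
    have "0\<^sub>m k m *\<^sub>v y = 0\<^sub>v k"
      using y by (intro eq_vecI) auto
    then have "c = F *\<^sub>v (T *\<^sub>v y + G *\<^sub>v c)"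
      using T G F y c FT FG by (simp add: mult_add_distrib_mat_vec assoc_mult_mat_vec[symmetric])
    also have "\<dots> = 0\<^sub>v k" unfolding Tyc using F by auto
    finally have c0: "c = 0\<^sub>v k" .
    with G have "G *\<^sub>v c = 0\<^sub>v (m + k)" by auto
    with Tyc T y have "T *\<^sub>v y = 0\<^sub>v (m + k)" by simp
    with T_inj y have y0: "y = 0\<^sub>v m" by blast
    have "v = y @\<^sub>v c" using v unfolding y_def c_def by simp
    also have "\<dots> = 0\<^sub>v (m + k)" using y0 c0 by (auto intro!: eq_vecI)
    finally show ?thesis .
  qed
  then show ?thesis
    using det_0_iff_vec_prod_zero_field[OF carrier_append_cols[OF T G]] by blast
qed

lemma left_inverse_with_complement:
  fixes T G F :: "'a::field mat"
  assumes T: "T \<in> carrier_mat (m + k) m"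
    and T_inj: "\<forall>v \<in> carrier_vec m. T *\<^sub>v v = 0\<^sub>v (m + k) \<longrightarrow> v = 0\<^sub>v m"
    and G: "G \<in> carrier_mat (m + k) k" and F: "F \<in> carrier_mat k (m + k)"
    and FT: "F * T = 0\<^sub>m k m" and FG: "F * G = 1\<^sub>m k"
  obtains S where "S \<in> carrier_mat m (m + k)" "S * T = 1\<^sub>m m" "T * S + G * F = 1\<^sub>m (m + k)"
proof -
  define P where "P = append_cols T G"
  have P: "P \<in> carrier_mat (m + k) (m + k)"
    unfolding P_def using T G by (rule carrier_append_cols)
  from det_non_zero_imp_unit[OF P det_append_cols_complement_nonzero[OF assms, folded P_def], of "()"]
  obtain Q where Q: "Q \<in> carrier_mat (m + k) (m + k)" "Q * P = 1\<^sub>m (m + k)" "P * Q = 1\<^sub>m (m + k)"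
    unfolding Units_def ring_mat_def by auto
  define S F' where "S = mat m (m + k) (\<lambda>(i, j). Q $$ (i, j))"
    and "F' = mat k (m + k) (\<lambda>(i, j). Q $$ (m + i, j))"
  have S: "S \<in> carrier_mat m (m + k)" and F': "F' \<in> carrier_mat k (m + k)"
    unfolding S_def F'_def by simp_all
  \<comment> \<open>S and F' are the top and bottom blocks of the inverse of [T | G]; F' then turns out to be F.\<close>
  have "Q = S @\<^sub>r F'"
    using Q(1) by (auto intro!: eq_matI simp: S_def F'_def append_rows_def)
  then have TSGF: "T * S + G * F' = 1\<^sub>m (m + k)"
    using Q(3) append_cols_mult_append_rows[OF T G S F'] unfolding P_def by simp
  have ST: "S * T = 1\<^sub>m m"
  proof (rule eq_matI)
    fix i j assume "i < dim_row (1\<^sub>m m :: 'a mat)" "j < dim_col (1\<^sub>m m :: 'a mat)"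
    then have ij: "i < m" "j < m" by auto
    have "(S * T) $$ (i, j) = (Q * P) $$ (i, j)"
      using ij T G S Q(1) by (simp add: P_def append_cols_def S_def scalar_prod_def)
    then show "(S * T) $$ (i, j) = 1\<^sub>m m $$ (i, j)" using Q(2) ij by simp
  qed (use S T in auto)
  have "F = F * (T * S + G * F')" using F TSGF by simp
  also have "\<dots> = (F * T) * S + (F * G) * F'"
    using F T S G F' by (subst mult_add_distrib_mat[OF F]) (auto simp: assoc_mult_mat)
  also have "\<dots> = F'" using FT FG S F' by simp
  finally show ?thesis using that S ST TSGF by simp
qed

(* F L G is the matrix of L acting on the quotient by the image of T. *)
lemma mat_trace_invariant_subspace:
  fixes L R T S G F :: "'a::comm_ring_1 mat"
  assumes L: "L \<in> carrier_mat n n" and R: "R \<in> carrier_mat m m"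
    and T: "T \<in> carrier_mat n m" and S: "S \<in> carrier_mat m n"
    and G: "G \<in> carrier_mat n k" and F: "F \<in> carrier_mat k n"
    and ST: "S * T = 1\<^sub>m m" and TSGF: "T * S + G * F = 1\<^sub>m n"
    and LT: "L * T = T * R"
  shows "mat_trace L = mat_trace R + mat_trace (F * L * G)"
proof -
  have "L = L * (T * S) + L * (G * F)"
    using mult_add_distrib_mat[OF L, of "T * S" n "G * F"] T S G F TSGF L by simp
  also have "L * (T * S) = T * R * S"
    using assoc_mult_mat[OF L T S] LT by simp
  also have "L * (G * F) = L * G * F"
    using assoc_mult_mat[OF L G F] by simp
  finally have "L = T * R * S + L * G * F" .
  then have "mat_trace L = mat_trace (T * R * S + L * G * F)" by (rule arg_cong)
  also have "\<dots> = mat_trace (T * R * S) + mat_trace (L * G * F)"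
    using T R S L G F by (intro mat_trace_add[of _ n]) auto
  also have "mat_trace (T * R * S) = mat_trace (S * (T * R))"
    using T R S by (intro mat_trace_mult_comm) auto
  also have "S * (T * R) = R"
    using assoc_mult_mat[OF S T R] ST R by simp
  also have "mat_trace (L * G * F) = mat_trace (F * (L * G))"
    using L G F by (intro mat_trace_mult_comm) auto
  also have "F * (L * G) = F * L * G"
    using assoc_mult_mat[OF F L G] by simp
  finally show ?thesis .
qed

theorem proposition4p8:
  fixes n :: nat
    and M Lg A :: "'k::field mat"   \<comment> \<open>M = rho(m_s), Lg = rho(l_s), A = rho(c_s)\<close>
    and T :: "'k mat"               \<comment> \<open>T_s : W_s \<rightarrow> V, with W_s = k^(n-1), V = k^n\<close>
    and R :: "'k mat"               \<comment> \<open>R = rho_s(K_s)\<close>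
    and f :: "'k mat"               \<comment> \<open>local trivialization f_s : V \<rightarrow> k (1 x n)\<close>
    and g :: "'k mat"               \<comment> \<open>right inverse f_s^{-1} : k \<rightarrow> V (n x 1)\<close>
  assumes n: "n \<ge> 1"
    and M: "M \<in> carrier_mat n n" "invertible_mat M"
    and Lg: "Lg \<in> carrier_mat n n" "invertible_mat Lg"
    and A: "A \<in> carrier_mat n n" "invertible_mat A"
    and comm: "M * Lg = Lg * M"
    and T: "T \<in> carrier_mat n (n - 1)"
    and T_inj: "\<forall>v \<in> carrier_vec (n - 1). T *\<^sub>v v = 0\<^sub>v n \<longrightarrow> v = 0\<^sub>v (n - 1)"
    and R: "R \<in> carrier_mat (n - 1) (n - 1)" "invertible_mat R"
    and M_triv: "M * T = T"
    and long: "Lg * T = T * R"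
    and f: "f \<in> carrier_mat 1 n" "f \<noteq> 0\<^sub>m 1 n"
    and fW: "f * T = 0\<^sub>m 1 (n - 1)"
    and g: "g \<in> carrier_mat n 1"
    and fg: "f * g = 1\<^sub>m 1"
  shows "scal (f * Lg * g) = mat_trace Lg - mat_trace R
       \<and> 1 - scal (f * (1\<^sub>m n - M) * g) = 1 - mat_trace (1\<^sub>m n - M)
       \<and> scal (f * A * (1\<^sub>m n - M) * g) = mat_trace (A - A * M)"
proof -
  obtain m where n_eq: "n = m + 1" using n by (metis add.commute le_add_diff_inverse)
  have Tm: "T \<in> carrier_mat n m" and Rm: "R \<in> carrier_mat m m"
    using T R(1) n_eq by simp_all
  obtain S where S: "S \<in> carrier_mat m n" and ST: "S * T = 1\<^sub>m m" and TSgf: "T * S + g * f = 1\<^sub>m n"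
    using left_inverse_with_complement[of T m 1 g f] Tm T_inj fW g f(1) fg n_eq by auto
  have trace_split: "mat_trace L = mat_trace R' + scal (f * L * g)"
    if L: "L \<in> carrier_mat n n" and R': "R' \<in> carrier_mat m m" and LT: "L * T = T * R'" for L R'
    using mat_trace_invariant_subspace[OF L R' Tm S g f(1) ST TSgf LT] L f(1) g
    by (simp add: mat_trace_eq_scal)
  have trace_if_kills_T: "mat_trace L = scal (f * L * g)"
    if L: "L \<in> carrier_mat n n" and LT: "L * T = 0\<^sub>m n m" for L
    using trace_split[OF L zero_carrier_mat] LT Tm by (simp add: mat_trace_def)
  define D where "D = 1\<^sub>m n - M"
  have D: "D \<in> carrier_mat n n" unfolding D_def using M(1) by (auto intro: minus_carrier_mat)
  have DT: "D * T = 0\<^sub>m n m"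
    unfolding D_def using minus_mult_distrib_mat[OF one_carrier_mat M(1) Tm] M_triv Tm by simp
  have "mat_trace Lg = mat_trace R + scal (f * Lg * g)" using trace_split[OF Lg(1) Rm long] .
  moreover have "mat_trace D = scal (f * D * g)" using trace_if_kills_T[OF D DT] .
  moreover have "mat_trace (A * D) = scal (f * A * D * g)"
    using trace_if_kills_T[of "A * D"] assoc_mult_mat[OF A(1) D Tm] DT
      assoc_mult_mat[OF f(1) A(1) D] A(1) D f(1) by simp
  moreover have "A - A * M = A * D"
    unfolding D_def using mult_minus_distrib_mat[OF A(1) one_carrier_mat M(1)] A(1) by simp
  ultimately show ?thesis unfolding D_def by simp
qed

end
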